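(* Let $p,q\geq0$ be integers with $(p,q)\notin\{(1,0),(0,1),(1,1)\}$. Then $\beta_{p,q}(D)\neq0$ for every real $D>4$, where $$\beta_{p,q}(D)=\frac{(-1)^q2^p}{D^q[(D-1)(D-2)]^p}\Big[(-1)^{p+q}2^{p+q-1}(D-2)(D-3)+2^{1-q}(D-2)(D-3)^p(D-4)^q+(-1)^p(D-2)^{p+q}(D-3)^p\Big].$$ *)

theory Defs
  imports Complex_Main
begin

text \<open>The function beta_{p,q}(D). Powers of 2 with possibly negative integer exponents
(p+q-1, 1-q) are written with real exponent powr (base 2 > 0).\<close>
definition beta :: "nat \<Rightarrow> nat \<Rightarrow> real \<Rightarrow> real" where
  "beta p q D =
     ((-1) ^ q * 2 ^ p) / (D ^ q * ((D - 1) * (D - 2)) ^ p) *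
     ((-1) ^ (p + q) * 2 powr (real p + real q - 1) * (D - 2) * (D - 3)
      + 2 powr (1 - real q) * (D - 2) * (D - 3) ^ p * (D - 4) ^ q
      + (-1) ^ p * (D - 2) ^ (p + q) * (D - 3) ^ p)"

end

theory Submission
  imports Defs
begin

text \<open>
  Put \<open>x = D - 2 > 2\<close>. Up to a nonzero factor, \<open>(-1)^p\<close> times the bracket of
  \<open>\<beta>\<^sub>p\<^sub>,\<^sub>q(D)\<close> is \<open>(-1)^q A + (-1)^p B + L\<close> with positive
  \<open>A = 2^(p+q-1) x (x-1)\<close>, \<open>B = 2^(1-q) x (x-1)^p (x-2)^q\<close> and
  \<open>L = x^(p+q) (x-1)^p\<close>. So it suffices that \<open>L\<close> dominates the terms carrying a minus
  sign: \<open>A\<close> when \<open>q\<close> is odd, \<open>B\<close> when \<open>p\<close> is odd, and \<open>A + B\<close> when both are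
  odd, where superadditivity \<open>2^q + (x-2)^q \<le> x^q\<close> does the work. The excluded pairs
  are exactly those where this domination fails.
\<close>

lemma power_add_le_power_sum:
  fixes a b :: "'a :: linordered_semidom"
  assumes "0 \<le> a" "0 \<le> b" "n \<ge> 1"
  shows "a ^ n + b ^ n \<le> (a + b) ^ n"
  using assms(3)
proof (induction n rule: dec_induct)
  case base
  show ?case by simp
next
  case (step n)
  have "(a + b) * (a ^ n + b ^ n) = a ^ Suc n + b ^ Suc n + (a * b ^ n + b * a ^ n)"
    by (simp add: algebra_simps)
  then have "a ^ Suc n + b ^ Suc n \<le> (a + b) * (a ^ n + b ^ n)"
    using assms by simp
  also have "\<dots> \<le> (a + b) * (a + b) ^ n"
    using step.IH assms by (simp add: mult_left_mono)
  finally show ?case by simp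
qed

definition beta_bracket :: "nat \<Rightarrow> nat \<Rightarrow> real \<Rightarrow> real" where
  "beta_bracket p q x =
     (-1) ^ (p + q) * (2 ^ (p + q) / 2) * x * (x - 1)
     + (2 / 2 ^ q) * x * (x - 1) ^ p * (x - 2) ^ q
     + (-1) ^ p * x ^ (p + q) * (x - 1) ^ p"

lemma beta_eq_bracket:
  "beta p q D = (-1) ^ q * 2 ^ p / (D ^ q * ((D - 1) * (D - 2)) ^ p) * beta_bracket p q (D - 2)"
proof -
  have "(2::real) powr (real p + real q - 1) = 2 ^ (p + q) / 2"
    by (simp add: powr_diff powr_realpow[symmetric])
  moreover have "(2::real) powr (1 - real q) = 2 / 2 ^ q"
    by (simp add: powr_diff powr_realpow)
  moreover have "D - 3 = (D - 2) - 1" "D - 4 = (D - 2) - 2"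
    by simp_all
  ultimately show ?thesis
    unfolding beta_def beta_bracket_def by (simp only:)
qed

lemma bracket_power2_term_le_lead:
  fixes x :: real
  assumes x: "x \<ge> 2" and pq: "p \<ge> 1 \<or> q \<ge> 3"
  shows "2 ^ (p + q) / 2 * x * (x - 1) \<le> x ^ (p + q) * (x - 1) ^ p"
proof (cases p)
  case 0
  with pq obtain k where q: "q = k + 3"
    by (metis le_add_diff_inverse2 not_one_le_zero)
  have "4 * x * (x - 1) \<le> x ^ 3"
  proof -
    have "0 \<le> x * (x - 2) ^ 2" using x by simp
    then show ?thesis by (simp add: power2_eq_square power3_eq_cube algebra_simps)
  qed
  have "2 ^ (p + q) / 2 * x * (x - 1) = 2 ^ k * (4 * x * (x - 1))"
    using 0 q by (simp add: power_add)
  also have "\<dots> \<le> x ^ k * x ^ 3"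
    using x \<open>4 * x * (x - 1) \<le> x ^ 3\<close> by (intro mult_mono power_mono) auto
  also have "\<dots> = x ^ (p + q) * (x - 1) ^ p"
    using 0 q by (simp add: power_add)
  finally show ?thesis .
next
  case (Suc m)
  have "2 ^ (p + q) / 2 * x * (x - 1) = x * (2 ^ (m + q) * (x - 1))"
    using Suc by simp
  also have "\<dots> \<le> x * (x ^ (m + q) * (x - 1) ^ p)"
    using x Suc by (intro mult_left_mono mult_mono power_mono) (auto simp: self_le_power)
  also have "\<dots> = x ^ (p + q) * (x - 1) ^ p"
    using Suc by simp
  finally show ?thesis .
qed

lemma bracket_mixed_term_le_lead:
  fixes x :: real
  assumes x: "x \<ge> 2" and "p \<ge> 1" and pq: "q \<ge> 1 \<or> p \<ge> 2"
  shows "2 / 2 ^ q * x * (x - 1) ^ p * (x - 2) ^ q \<le> x ^ (p + q) * (x - 1) ^ p"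
proof -
  have "2 / 2 ^ q * x * (x - 2) ^ q \<le> x ^ (p + q)"
  proof (cases "q = 0")
    case True
    with pq have "p \<ge> 2" by simp
    have "2 * x \<le> x ^ 2" using x by (simp add: power2_eq_square)
    also have "\<dots> \<le> x ^ p" using x \<open>p \<ge> 2\<close> by (intro power_increasing) auto
    finally show ?thesis using True by simp
  next
    case False
    then have "2 / 2 ^ q \<le> (1::real)"
      by (simp add: self_le_power)
    then have "2 / 2 ^ q * (x * (x - 2) ^ q) \<le> 1 * (x * (x - 2) ^ q)"
      using x by (intro mult_right_mono) auto
    then have "2 / 2 ^ q * x * (x - 2) ^ q \<le> x * (x - 2) ^ q"
      by (simp only: ac_simps mult_1)
    also have "\<dots> \<le> x ^ p * x ^ q"
      using x \<open>p \<ge> 1\<close> by (intro mult_mono power_mono) (auto simp: self_le_power)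
    finally show ?thesis by (simp add: power_add)
  qed
  then have "2 / 2 ^ q * x * (x - 2) ^ q * (x - 1) ^ p \<le> x ^ (p + q) * (x - 1) ^ p"
    using x by (intro mult_right_mono) auto
  then show ?thesis
    by (simp only: ac_simps)
qed

lemma bracket_side_terms_less_lead:
  fixes x :: real
  assumes x: "x > 2" and "p \<ge> 1" "q \<ge> 1" "p + q \<ge> 3"
  shows "2 ^ (p + q) / 2 * x * (x - 1) + 2 / 2 ^ q * x * (x - 1) ^ p * (x - 2) ^ q
    < x ^ (p + q) * (x - 1) ^ p"
proof -
  obtain m where p: "p = Suc m" using \<open>p \<ge> 1\<close> by (cases p) auto
  have "2 / 2 ^ q < (2::real) ^ m"
  proof -
    have "(2::real) ^ 1 < 2 ^ (m + q)"
      using assms p by (intro power_strict_increasing) auto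
    then show ?thesis by (simp add: divide_less_eq power_add)
  qed
  have "x - 1 \<le> (x - 1) ^ p"
    using x \<open>p \<ge> 1\<close> by (simp add: self_le_power)
  have "2 ^ (p + q) / 2 * x * (x - 1) + 2 / 2 ^ q * x * (x - 1) ^ p * (x - 2) ^ q
      < x * (x - 1) ^ p * (2 ^ m * (2 ^ q + (x - 2) ^ q))"
  proof -
    have "2 ^ (p + q) / 2 * x * (x - 1) \<le> x * (x - 1) ^ p * (2 ^ m * 2 ^ q)"
      using x \<open>x - 1 \<le> (x - 1) ^ p\<close> p by (simp add: power_add)
    moreover have "2 / 2 ^ q * (x * (x - 1) ^ p * (x - 2) ^ q) < 2 ^ m * (x * (x - 1) ^ p * (x - 2) ^ q)"
      using x \<open>2 / 2 ^ q < 2 ^ m\<close> by (intro mult_strict_right_mono) auto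
    ultimately show ?thesis by (simp only: ac_simps distrib_left)
  qed
  also have "\<dots> \<le> x * (x - 1) ^ p * (x ^ m * x ^ q)"
    using x \<open>q \<ge> 1\<close> power_add_le_power_sum[of 2 "x - 2" q]
    by (intro mult_left_mono mult_mono power_mono) auto
  also have "\<dots> = x ^ (p + q) * (x - 1) ^ p"
    using p by (simp add: power_add)
  finally show ?thesis .
qed

lemma beta_bracket_sign:
  fixes x :: real
  assumes x: "x > 2" and pq: "(p, q) \<notin> {(1, 0), (0, 1), (1, 1)}"
  shows "(-1) ^ p * beta_bracket p q x > 0"
proof -
  define A where "A = 2 ^ (p + q) / 2 * x * (x - 1)"
  define B where "B = 2 / 2 ^ q * x * (x - 1) ^ p * (x - 2) ^ q"
  define L where "L = x ^ (p + q) * (x - 1) ^ p"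
  have "A > 0" "B > 0" "L > 0"
    using x unfolding A_def B_def L_def by simp_all
  have "(-1) ^ p * beta_bracket p q x
      = ((-1) ^ p * (-1) ^ (p + q)) * A + (-1) ^ p * B + ((-1) ^ p * (-1) ^ p) * L"
    unfolding beta_bracket_def A_def B_def L_def by (simp only: distrib_left mult.assoc)
  also have "(-1) ^ p * (-1) ^ (p + q) = ((-1) ^ q :: real)"
    by (simp add: power_add flip: mult.assoc)
  also have "(-1) ^ p * (-1) ^ p = (1 :: real)"
    by (simp flip: power_add)
  finally have sign: "(-1) ^ p * beta_bracket p q x = (-1) ^ q * A + (-1) ^ p * B + L"
    by simp
  consider "even p" "even q" | "even p" "odd q" | "odd p" "even q" | "odd p" "odd q"
    by blast
  then show ?thesis
  proof cases
    case 1
    then show ?thesis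
      using sign \<open>A > 0\<close> \<open>B > 0\<close> \<open>L > 0\<close> by simp
  next
    case 2
    with pq have "p \<ge> 1 \<or> q \<ge> 3"
      by (auto elim!: oddE)
    then have "A \<le> L"
      using x unfolding A_def L_def by (intro bracket_power2_term_le_lead) auto
    then show ?thesis
      using 2 sign \<open>B > 0\<close> by simp
  next
    case 3
    with pq have "p \<ge> 1" "q \<ge> 1 \<or> p \<ge> 2"
      by (auto elim: oddE)
    then have "B \<le> L"
      using x unfolding B_def L_def by (intro bracket_mixed_term_le_lead) auto
    then show ?thesis
      using 3 sign \<open>A > 0\<close> by simp
  next
    case 4
    with pq have "p \<ge> 1" "q \<ge> 1" "p + q \<ge> 3"
      by (auto elim!: oddE)
    then have "A + B < L"
      using x unfolding A_def B_def L_def by (intro bracket_side_terms_less_lead) auto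
    then show ?thesis
      using 4 sign by simp
  qed
qed

theorem mainTheorem7:
  fixes p q :: nat and D :: real
  assumes "(p, q) \<notin> {(1, 0), (0, 1), (1, 1)}"
    and "D > 4"
  shows "beta p q D \<noteq> 0"
proof -
  have "(-1) ^ p * beta_bracket p q (D - 2) > 0"
    using assms by (intro beta_bracket_sign) auto
  then have "beta_bracket p q (D - 2) \<noteq> 0"
    by auto
  moreover have "(-1) ^ q * 2 ^ p / (D ^ q * ((D - 1) * (D - 2)) ^ p) \<noteq> (0::real)"
    using assms(2) by simp
  ultimately show ?thesis
    unfolding beta_eq_bracket by simp
qed

end
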